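(* Let $x_1,\dots,x_n$ be independent Bernoulli random variables, $p_i=\mathbb{E}x_i$ and $\bar p=\frac1n\sum_{i=1}^np_i$. For any $r>0$, $\varepsilon>0$, $\delta\in(0,1)$ and $q\in[0,1]$ with $|q-\bar p|\le r$, with probability at least $1-\delta$, $$\frac1n\sum_{i=1}^nx_i-\bar p<\varepsilon r+\sqrt{\frac{2q(1-q)\log(1/\delta)}{n}}+\Big(\frac23+\frac1{2\varepsilon}\Big)\frac{\log(1/\delta)}{n}.$$ The same upper bound also holds for $\bar p-\frac1n\sum_{i=1}^nx_i$ with probability at least $1-\delta$. *)

theory Defs
  imports "HOL-Probability.Probability"
begin

end

theory Submission
  imports Defs
begin

(* For |t| < 3 the exponential series gives exp (t y) <= 1 + t y + y^2 psi(t) whenever |y| <= 1,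
   where psi(t) = t^2 / (2 (1 - |t|/3)); hence a Bernoulli variable with mean p has centred moment
   generating function at most exp (p (1 - p) psi(t)). By independence and Chernoff's bound, with
   a suitable t, the centred sum exceeds sqrt (2 V L) + 2 L / 3 with probability at most exp (-L)
   whenever V bounds the variance sum p_i (1 - p_i); by concavity V = n pbar (1 - pbar) will do.
   Finally pbar (1 - pbar) <= q (1 - q) + |q - pbar| and sqrt (2 r L / n) <= eps r + L / (2 eps n)
   turn the deviation sqrt (2 pbar (1 - pbar) L / n) into the bound of the theorem, with L = ln (1/delta). *)

definition Bernstein_psi :: "real \<Rightarrow> real" where
  "Bernstein_psi t = t\<^sup>2 / (2 * (1 - \<bar>t\<bar> / 3))"

lemma two_mult_three_power_le_fact: "2 * 3 ^ n \<le> (fact (n + 2) :: real)"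
proof (induction n)
  case (Suc n)
  have "2 * 3 ^ Suc n = 3 * (2 * 3 ^ n :: real)" by simp
  also have "\<dots> \<le> (of_nat n + 3) * fact (n + 2)"
    using Suc by (intro mult_mono) auto
  also have "\<dots> = fact (Suc n + 2)"
    by (simp add: algebra_simps)
  finally show ?case .
qed simp

lemma exp_le_Bernstein:
  fixes t y :: real
  assumes t: "\<bar>t\<bar> < 3" and y: "\<bar>y\<bar> \<le> 1"
  shows "exp (t * y) \<le> 1 + t * y + y\<^sup>2 * Bernstein_psi t"
proof -
  define x where "x = t * y"
  define c where "c = y\<^sup>2 * t\<^sup>2 / 2"
  have geometric: "(\<lambda>n. c * (\<bar>t\<bar> / 3) ^ n) sums (y\<^sup>2 * Bernstein_psi t)"
  proof -
    have "(\<lambda>n. c * (\<bar>t\<bar> / 3) ^ n) sums (c * (1 / (1 - \<bar>t\<bar> / 3)))"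
      using t by (intro sums_mult geometric_sums) simp
    also have "c * (1 / (1 - \<bar>t\<bar> / 3)) = y\<^sup>2 * Bernstein_psi t"
      by (simp add: c_def Bernstein_psi_def)
    finally show ?thesis .
  qed
  have term_le: "inverse (fact (n + 2)) * x ^ (n + 2) \<le> c * (\<bar>t\<bar> / 3) ^ n" for n
  proof -
    have "x ^ (n + 2) \<le> \<bar>x\<bar> ^ (n + 2)"
      by (metis power_abs abs_ge_self)
    also have "\<dots> = \<bar>t\<bar> ^ n * \<bar>y\<bar> ^ n * (t\<^sup>2 * y\<^sup>2)"
      by (simp add: x_def abs_mult power_add power_mult_distrib power2_eq_square mult_ac)
    also have "\<dots> \<le> \<bar>t\<bar> ^ n * 1 * (t\<^sup>2 * y\<^sup>2)"
      using y by (intro mult_right_mono mult_left_mono) (auto simp: power_le_one)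
    finally have "inverse (fact (n + 2)) * x ^ (n + 2)
        \<le> inverse (fact (n + 2)) * (\<bar>t\<bar> ^ n * (t\<^sup>2 * y\<^sup>2))"
      by (intro mult_left_mono) simp_all
    also have "\<dots> \<le> inverse (2 * 3 ^ n) * (\<bar>t\<bar> ^ n * (t\<^sup>2 * y\<^sup>2))"
      using two_mult_three_power_le_fact[of n] by (intro mult_right_mono le_imp_inverse_le) auto
    also have "\<dots> = c * (\<bar>t\<bar> / 3) ^ n"
      by (simp add: c_def power_divide field_simps)
    finally show ?thesis .
  qed
  have "exp x - 1 - x = (\<Sum>n. inverse (fact (n + 2)) * x ^ (n + 2))"
    using exp_first_two_terms[of x] by simp
  also have "\<dots> \<le> (\<Sum>n. c * (\<bar>t\<bar> / 3) ^ n)"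
    by (intro suminf_le term_le summable_exp[THEN summable_ignore_initial_segment]
        sums_summable[OF geometric])
  also have "\<dots> = y\<^sup>2 * Bernstein_psi t"
    using geometric by (simp add: sums_iff)
  finally show ?thesis by (simp add: x_def)
qed

lemma Bernstein_exponent_le:
  fixes L W V :: real
  assumes L: "L > 0" and W: "0 \<le> W" "W \<le> V"
  obtains l where "0 < l" "l < 3"
    "- l * (sqrt (2 * V * L) + 2 * L / 3) + Bernstein_psi l * W \<le> - L"
proof (cases "V = 0")
  case True
  with W L show ?thesis by (intro that[of 2]) auto
next
  case False
  with W have V: "V > 0" by simp
  define S where "S = sqrt (2 * V * L)"
  define T where "T = S + 2 * L / 3"
  (* chosen so that Bernstein_psi l * V = l * T / 2 *)
  define l where "l = T / (V + T / 3)"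
  have S: "S \<ge> 0" "S\<^sup>2 = 2 * V * L"
    using V L by (simp_all add: S_def)
  have T: "T > 0" using S L by (simp add: T_def)
  have den: "V + T / 3 > 0" using V T by simp
  have l: "0 < l" "l < 3"
    using T den V by (simp_all add: l_def divide_less_eq)
  have "Bernstein_psi l * W \<le> Bernstein_psi l * V"
    using W l by (intro mult_left_mono) (auto simp: Bernstein_psi_def)
  also have "Bernstein_psi l * V = l * (l * (V + T / 3)) / 2"
  proof -
    have "1 - \<bar>l\<bar> / 3 = V / (V + T / 3)"
      using l den by (simp add: l_def field_simps)
    then have "Bernstein_psi l = l\<^sup>2 / (2 * (V / (V + T / 3)))"
      by (simp add: Bernstein_psi_def)
    then show ?thesis
      using V den by (simp add: power2_eq_square field_simps)
  qed
  also have "l * (V + T / 3) = T"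
    using den by (simp add: l_def)
  finally have "Bernstein_psi l * W \<le> l * T / 2" .
  moreover have "l * T / 2 = T\<^sup>2 / (2 * (V + T / 3))"
    by (simp add: l_def power2_eq_square)
  ultimately have "- l * T + Bernstein_psi l * W \<le> - (T\<^sup>2 / (2 * (V + T / 3)))"
    by linarith
  also have "\<dots> \<le> - L"
  proof -
    (* the difference of the two sides is 2 L S / 3 *)
    have "L * (2 * (V + T / 3)) \<le> T\<^sup>2"
      using S L by (simp add: T_def power2_eq_square algebra_simps)
    then show ?thesis using den by (simp add: le_divide_eq mult.commute)
  qed
  finally show ?thesis using l by (intro that) (simp_all add: T_def S_def)
qed

lemma sum_mult_one_minus_le_mean:
  fixes p :: "'i \<Rightarrow> real"
  assumes "finite I" "I \<noteq> {}"
  defines "m \<equiv> 1 / real (card I) * (\<Sum>i\<in>I. p i)"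
  shows "(\<Sum>i\<in>I. p i * (1 - p i)) \<le> real (card I) * (m * (1 - m))"
proof -
  define c where "c = real (card I)"
  have c: "c > 0" using assms by (simp add: c_def card_gt_0_iff)
  have sum_p: "(\<Sum>i\<in>I. p i) = c * m" using c by (simp add: m_def c_def)
  have "0 \<le> (\<Sum>i\<in>I. (p i - m)\<^sup>2)" by (simp add: sum_nonneg)
  also have "\<dots> = (\<Sum>i\<in>I. p i * p i - 2 * m * p i + m * m)"
    by (simp add: power2_eq_square algebra_simps)
  also have "\<dots> = (\<Sum>i\<in>I. p i * p i) - 2 * m * (\<Sum>i\<in>I. p i) + c * m\<^sup>2"
    by (simp add: sum.distrib sum_subtractf sum_distrib_left c_def power2_eq_square)
  finally show ?thesis
    using sum_p by (simp add: c_def power2_eq_square algebra_simps sum_subtractf)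
qed

lemma mult_one_minus_le_add_abs_diff:
  fixes m q :: real
  assumes "0 \<le> m" "m \<le> 1" "0 \<le> q" "q \<le> 1"
  shows "m * (1 - m) \<le> q * (1 - q) + \<bar>q - m\<bar>"
proof -
  have "m * (1 - m) - q * (1 - q) = (q - m) * (q + m - 1)" by (simp add: algebra_simps)
  also have "\<dots> \<le> \<bar>q - m\<bar> * \<bar>q + m - 1\<bar>" by (metis abs_ge_self abs_mult)
  also have "\<dots> \<le> \<bar>q - m\<bar>" using assms by (intro mult_left_le) auto
  finally show ?thesis by simp
qed

lemma sqrt_two_mult_le:
  fixes a b \<epsilon> :: real
  assumes "0 \<le> a" "0 \<le> b" "\<epsilon> > 0"
  shows "sqrt (2 * a * b) \<le> \<epsilon> * a + b / (2 * \<epsilon>)"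
proof -
  have "sqrt (2 * a * b) = sqrt ((2 * \<epsilon> * a) * (b / \<epsilon>))"
    using assms by simp
  also have "\<dots> \<le> (2 * \<epsilon> * a + b / \<epsilon>) / 2"
    using assms by (intro arith_geo_mean_sqrt) auto
  finally show ?thesis by (simp add: field_simps)
qed

lemma Bernstein_deviation_le:
  fixes L N \<epsilon> r q m :: real
  assumes "L \<ge> 0" "N > 0" "\<epsilon> > 0"
    and "0 \<le> q" "q \<le> 1" "0 \<le> m" "m \<le> 1" "\<bar>q - m\<bar> \<le> r"
  shows "sqrt (2 * (m * (1 - m)) * L / N) + 2 * L / (3 * N)
          \<le> \<epsilon> * r + sqrt (2 * q * (1 - q) * L / N) + (2/3 + 1 / (2 * \<epsilon>)) * L / N"
proof -
  have LN: "L / N \<ge> 0" using assms by simp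
  have "sqrt (2 * (m * (1 - m)) * L / N) \<le> sqrt (2 * q * (1 - q) * L / N + 2 * r * (L / N))"
  proof (rule real_sqrt_le_mono)
    have "m * (1 - m) \<le> q * (1 - q) + r"
      using mult_one_minus_le_add_abs_diff[of m q] assms by simp
    then have "2 * (L / N) * (m * (1 - m)) \<le> 2 * (L / N) * (q * (1 - q) + r)"
      using LN by (intro mult_left_mono) auto
    then show "2 * (m * (1 - m)) * L / N \<le> 2 * q * (1 - q) * L / N + 2 * r * (L / N)"
      using assms(2) by (simp add: field_simps)
  qed
  also have "\<dots> \<le> sqrt (2 * q * (1 - q) * L / N) + sqrt (2 * r * (L / N))"
    using assms by (intro sqrt_add_le_add_sqrt) auto
  also have "sqrt (2 * r * (L / N)) \<le> \<epsilon> * r + L / N / (2 * \<epsilon>)"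
    using assms LN by (intro sqrt_two_mult_le) auto
  finally have "sqrt (2 * (m * (1 - m)) * L / N)
      \<le> sqrt (2 * q * (1 - q) * L / N) + (\<epsilon> * r + L / N / (2 * \<epsilon>))"
    by simp
  moreover have "2 * L / (3 * N) + L / N / (2 * \<epsilon>) = (2/3 + 1 / (2 * \<epsilon>)) * L / N"
    using assms by (simp add: field_simps)
  ultimately show ?thesis by linarith
qed

context prob_space
begin

lemma integrable_Bernoulli:
  fixes Z :: "'a \<Rightarrow> real"
  assumes "random_variable borel Z" and "AE \<omega> in M. Z \<omega> \<in> {0, 1}"
  shows "integrable M Z"
  by (rule integrable_const_bound[of _ 1]) (auto intro!: eventually_mono[OF assms(2)] assms(1))

lemma expectation_Bernoulli_bounds:
  fixes Z :: "'a \<Rightarrow> real"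
  assumes "random_variable borel Z" and Z01: "AE \<omega> in M. Z \<omega> \<in> {0, 1}"
  shows "0 \<le> expectation Z" and "expectation Z \<le> 1"
proof -
  show "0 \<le> expectation Z"
    by (rule integral_nonneg_AE) (auto intro!: eventually_mono[OF Z01])
  have "expectation Z \<le> expectation (\<lambda>_. 1)"
    by (rule integral_mono_AE[OF integrable_Bernoulli[OF assms]])
       (auto intro!: eventually_mono[OF Z01])
  then show "expectation Z \<le> 1" by (simp add: prob_space)
qed

lemma Bernoulli_centered_mgf_le:
  fixes t :: real and Z :: "'a \<Rightarrow> real"
  assumes [measurable]: "random_variable borel Z" and Z01: "AE \<omega> in M. Z \<omega> \<in> {0, 1}"
    and t: "\<bar>t\<bar> < 3"
  shows "(\<integral>\<^sup>+\<omega>. ennreal (exp (t * (Z \<omega> - expectation Z))) \<partial>M)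
          \<le> ennreal (exp (expectation Z * (1 - expectation Z) * Bernstein_psi t))"
proof -
  define p where "p = expectation Z"
  define g where "g x = exp (t * (x - p))" for x
  have p0: "0 \<le> p" and p1: "p \<le> 1"
    using expectation_Bernoulli_bounds[OF assms(1,2)] by (simp_all add: p_def)
  have mixture_le: "(1 - p) * g 0 + p * g 1 \<le> exp (p * (1 - p) * Bernstein_psi t)"
  proof -
    have "g 0 \<le> 1 + t * (- p) + (- p)\<^sup>2 * Bernstein_psi t"
      unfolding g_def using exp_le_Bernstein[OF t, of "- p"] p0 p1 by simp
    moreover have "g 1 \<le> 1 + t * (1 - p) + (1 - p)\<^sup>2 * Bernstein_psi t"
      unfolding g_def using exp_le_Bernstein[OF t, of "1 - p"] p0 p1 by simp
    ultimately have "(1 - p) * g 0 + p * g 1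
          \<le> (1 - p) * (1 + t * (- p) + (- p)\<^sup>2 * Bernstein_psi t)
            + p * (1 + t * (1 - p) + (1 - p)\<^sup>2 * Bernstein_psi t)"
      using p0 p1 by (intro add_mono mult_left_mono) auto
    also have "\<dots> = 1 + p * (1 - p) * Bernstein_psi t"
      by (simp add: power2_eq_square algebra_simps)
    also have "\<dots> \<le> exp (p * (1 - p) * Bernstein_psi t)"
      by (rule exp_ge_add_one_self)
    finally show ?thesis .
  qed
  have "(\<integral>\<^sup>+\<omega>. ennreal (g (Z \<omega>)) \<partial>M) = (\<integral>\<^sup>+\<omega>. ennreal (g 0 + (g 1 - g 0) * Z \<omega>) \<partial>M)"
    by (intro nn_integral_cong_AE eventually_mono[OF Z01]) auto
  also have "\<dots> = ennreal (expectation (\<lambda>\<omega>. g 0 + (g 1 - g 0) * Z \<omega>))"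
    using integrable_Bernoulli[OF assms(1,2)]
    by (intro nn_integral_eq_integral eventually_mono[OF Z01]) (auto simp: g_def)
  also have "expectation (\<lambda>\<omega>. g 0 + (g 1 - g 0) * Z \<omega>) = (1 - p) * g 0 + p * g 1"
    using integrable_Bernoulli[OF assms(1,2)] by (simp add: prob_space p_def algebra_simps)
  also have "ennreal \<dots> \<le> ennreal (exp (p * (1 - p) * Bernstein_psi t))"
    using mixture_le by (rule ennreal_leI)
  finally show ?thesis
    by (simp add: g_def p_def)
qed

lemma Bernoulli_sum_Chernoff:
  fixes X :: "'i \<Rightarrow> 'a \<Rightarrow> real" and s l T :: real
  assumes fin: "finite I" and indep: "indep_vars (\<lambda>_. borel) X I"
    and X01: "\<And>i. i \<in> I \<Longrightarrow> AE \<omega> in M. X i \<omega> \<in> {0, 1}"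
    and s: "\<bar>s\<bar> = 1" and l: "0 < l" "l < 3"
  shows "prob {\<omega> \<in> space M. T \<le> (\<Sum>i\<in>I. s * (X i \<omega> - expectation (X i)))}
          \<le> exp (- l * T + Bernstein_psi l * (\<Sum>i\<in>I. expectation (X i) * (1 - expectation (X i))))"
proof -
  have [measurable]: "random_variable borel (X i)" if "i \<in> I" for i
    using that indep unfolding indep_vars_def by blast
  define p where "p i = expectation (X i)" for i
  define f where "f \<omega> = (\<Sum>i\<in>I. s * (X i \<omega> - p i))" for \<omega>
  have [measurable]: "f \<in> borel_measurable M"
    unfolding f_def by measurable
  have psi: "Bernstein_psi (l * s) = Bernstein_psi l"
    using s power2_abs[of s] by (simp add: Bernstein_psi_def abs_mult power_mult_distrib)
  have "ennreal (prob {\<omega> \<in> space M. T \<le> f \<omega>}) = emeasure M {\<omega> \<in> space M. T \<le> f \<omega>}"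
    by (simp add: emeasure_eq_measure)
  also have "\<dots> \<le> ennreal (exp (- l * T)) * (\<integral>\<^sup>+\<omega>\<in>space M. exp (l * f \<omega>) \<partial>M)"
    by (intro Chernoff_ineq_nn_integral_ge l) auto
  also have "(\<integral>\<^sup>+\<omega>\<in>space M. exp (l * f \<omega>) \<partial>M) =
             (\<integral>\<^sup>+\<omega>. (\<Prod>i\<in>I. ennreal (exp ((l * s) * (X i \<omega> - p i)))) \<partial>M)"
    by (intro nn_integral_cong)
       (simp_all add: f_def sum_distrib_left exp_sum fin prod_ennreal mult.assoc)
  also have "\<dots> = (\<Prod>i\<in>I. \<integral>\<^sup>+\<omega>. ennreal (exp ((l * s) * (X i \<omega> - p i))) \<partial>M)"
    by (intro indep_vars_nn_integral fin indep_vars_compose2[OF indep]) auto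
  also have "\<dots> \<le> (\<Prod>i\<in>I. ennreal (exp (p i * (1 - p i) * Bernstein_psi l)))"
  proof (intro prod_mono_ennreal)
    fix i assume i: "i \<in> I"
    show "(\<integral>\<^sup>+\<omega>. ennreal (exp ((l * s) * (X i \<omega> - p i))) \<partial>M)
          \<le> ennreal (exp (p i * (1 - p i) * Bernstein_psi l))"
      using Bernoulli_centered_mgf_le[of "X i" "l * s"] i X01[OF i] s l
      by (simp add: p_def psi abs_mult)
  qed
  also have "(\<Prod>i\<in>I. ennreal (exp (p i * (1 - p i) * Bernstein_psi l)))
             = ennreal (exp (Bernstein_psi l * (\<Sum>i\<in>I. p i * (1 - p i))))"
    by (simp add: prod_ennreal exp_sum fin sum_distrib_left mult_ac)
  finally have "ennreal (prob {\<omega> \<in> space M. T \<le> f \<omega>})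
      \<le> ennreal (exp (- l * T) * exp (Bernstein_psi l * (\<Sum>i\<in>I. p i * (1 - p i))))"
    by (simp add: ennreal_mult' mult_left_mono)
  then show ?thesis
    by (simp add: f_def p_def exp_add[symmetric] ennreal_le_iff)
qed

lemma Bernstein_Bernoulli_sum:
  fixes X :: "'i \<Rightarrow> 'a \<Rightarrow> real" and s L V :: real
  assumes fin: "finite I" and indep: "indep_vars (\<lambda>_. borel) X I"
    and X01: "\<And>i. i \<in> I \<Longrightarrow> AE \<omega> in M. X i \<omega> \<in> {0, 1}"
    and s: "\<bar>s\<bar> = 1" and L: "L > 0"
    and V: "(\<Sum>i\<in>I. expectation (X i) * (1 - expectation (X i))) \<le> V"
  shows "prob {\<omega> \<in> space M. sqrt (2 * V * L) + 2 * L / 3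
                \<le> (\<Sum>i\<in>I. s * (X i \<omega> - expectation (X i)))} \<le> exp (- L)"
proof -
  have "0 \<le> (\<Sum>i\<in>I. expectation (X i) * (1 - expectation (X i)))"
    using indep X01 expectation_Bernoulli_bounds unfolding indep_vars_def
    by (intro sum_nonneg mult_nonneg_nonneg) auto
  then obtain l where "0 < l" "l < 3" and
    "- l * (sqrt (2 * V * L) + 2 * L / 3)
       + Bernstein_psi l * (\<Sum>i\<in>I. expectation (X i) * (1 - expectation (X i))) \<le> - L"
    using Bernstein_exponent_le[OF L _ V] by blast
  then show ?thesis
    using Bernoulli_sum_Chernoff[OF fin indep X01 s \<open>0 < l\<close> \<open>l < 3\<close>] order.trans by fastforce
qed

lemma Bernstein_Bernoulli_mean:
  fixes X :: "'i \<Rightarrow> 'a \<Rightarrow> real" and s L :: real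
  assumes fin: "finite I" and "I \<noteq> {}" and indep: "indep_vars (\<lambda>_. borel) X I"
    and X01: "\<And>i. i \<in> I \<Longrightarrow> AE \<omega> in M. X i \<omega> \<in> {0, 1}"
    and s: "\<bar>s\<bar> = 1" and L: "L > 0"
  defines "n \<equiv> real (card I)"
  defines "m \<equiv> 1 / n * (\<Sum>i\<in>I. expectation (X i))"
  shows "prob {\<omega> \<in> space M. sqrt (2 * (m * (1 - m)) * L / n) + 2 * L / (3 * n)
                \<le> s * (1 / n * (\<Sum>i\<in>I. X i \<omega>) - m)} \<le> exp (- L)"
proof -
  have n: "n > 0" using assms by (simp add: n_def card_gt_0_iff)
  have "sqrt (2 * (n * (m * (1 - m))) * L) = sqrt (n\<^sup>2 * (2 * (m * (1 - m)) * L / n))"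
    using n by (simp add: power2_eq_square)
  also have "\<dots> = n * sqrt (2 * (m * (1 - m)) * L / n)"
    using n by (simp only: real_sqrt_mult real_sqrt_abs abs_of_pos)
  finally have threshold: "sqrt (2 * (m * (1 - m)) * L / n) + 2 * L / (3 * n)
      = (sqrt (2 * (n * (m * (1 - m))) * L) + 2 * L / 3) / n"
    using n by (simp add: field_simps)
  have deviation: "s * (1 / n * (\<Sum>i\<in>I. X i \<omega>) - m)
      = (\<Sum>i\<in>I. s * (X i \<omega> - expectation (X i))) / n" for \<omega>
    using n by (simp add: m_def sum_subtractf flip: sum_distrib_left) (simp add: field_simps)
  have "{\<omega> \<in> space M. sqrt (2 * (m * (1 - m)) * L / n) + 2 * L / (3 * n)
                      \<le> s * (1 / n * (\<Sum>i\<in>I. X i \<omega>) - m)}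
      = {\<omega> \<in> space M. sqrt (2 * (n * (m * (1 - m))) * L) + 2 * L / 3
                      \<le> (\<Sum>i\<in>I. s * (X i \<omega> - expectation (X i)))}"
    using n by (simp only: threshold deviation divide_le_cancel) simp
  also have "prob \<dots> \<le> exp (- L)"
    using sum_mult_one_minus_le_mean[OF fin \<open>I \<noteq> {}\<close>, of "\<lambda>i. expectation (X i)"]
    unfolding m_def n_def by (intro Bernstein_Bernoulli_sum[OF fin indep X01 s L])
  finally show ?thesis .
qed

lemma prob_less_ge_one_minus_tail:
  fixes f :: "'a \<Rightarrow> real"
  assumes [measurable]: "f \<in> borel_measurable M"
    and tail: "prob {\<omega> \<in> space M. a \<le> f \<omega>} \<le> \<delta>" and "a \<le> b"
  shows "1 - \<delta> \<le> prob {\<omega> \<in> space M. f \<omega> < b}"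
proof -
  have "1 - \<delta> \<le> prob (space M - {\<omega> \<in> space M. a \<le> f \<omega>})"
    using tail by (subst prob_compl) auto
  also have "\<dots> \<le> prob {\<omega> \<in> space M. f \<omega> < b}"
    using \<open>a \<le> b\<close> by (intro finite_measure_mono) auto
  finally show ?thesis .
qed

end

theorem lemma2:
  fixes M :: "'a measure" and X :: "nat \<Rightarrow> 'a \<Rightarrow> real" and n :: nat
    and r \<epsilon> \<delta> q :: real
  assumes "prob_space M"
    and "n > 0"
    and "prob_space.indep_vars M (\<lambda>_. borel) X {1..n}"
    and "\<And>i. i \<in> {1..n} \<Longrightarrow> AE \<omega> in M. X i \<omega> \<in> {0, 1}"
    and "r > 0" and "\<epsilon> > 0" and "0 < \<delta>" and "\<delta> < 1"
    and "0 \<le> q" and "q \<le> 1"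
    and "\<bar>q - (1 / real n) * (\<Sum>i=1..n. prob_space.expectation M (X i))\<bar> \<le> r"
  shows "measure M {\<omega> \<in> space M.
            (1 / real n) * (\<Sum>i=1..n. X i \<omega>)
              - (1 / real n) * (\<Sum>i=1..n. prob_space.expectation M (X i))
            < \<epsilon> * r + sqrt (2 * q * (1 - q) * ln (1 / \<delta>) / real n)
              + (2/3 + 1 / (2 * \<epsilon>)) * ln (1 / \<delta>) / real n} \<ge> 1 - \<delta>
   \<and> measure M {\<omega> \<in> space M.
            (1 / real n) * (\<Sum>i=1..n. prob_space.expectation M (X i))
              - (1 / real n) * (\<Sum>i=1..n. X i \<omega>)
            < \<epsilon> * r + sqrt (2 * q * (1 - q) * ln (1 / \<delta>) / real n)
              + (2/3 + 1 / (2 * \<epsilon>)) * ln (1 / \<delta>) / real n} \<ge> 1 - \<delta>"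
proof -
  interpret prob_space M by fact
  note indep = assms(3) and X01 = assms(4)
  have [measurable]: "random_variable borel (X i)" if "i \<in> {1..n}" for i
    using that indep unfolding indep_vars_def by blast
  define L where "L = ln (1 / \<delta>)"
  define m where "m = 1 / real n * (\<Sum>i=1..n. expectation (X i))"
  define D where "D = sqrt (2 * (m * (1 - m)) * L / real n) + 2 * L / (3 * real n)"
  define B where
    "B = \<epsilon> * r + sqrt (2 * q * (1 - q) * L / real n) + (2/3 + 1 / (2 * \<epsilon>)) * L / real n"
  have L: "L > 0" and exp_L: "exp (- L) = \<delta>"
    using assms(7,8) by (simp_all add: L_def ln_div)
  have p01: "0 \<le> expectation (X i)" "expectation (X i) \<le> 1" if "i \<in> {1..n}" for i
    using expectation_Bernoulli_bounds[OF _ X01[OF that]] that by simp_all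
  have "0 \<le> m"
    unfolding m_def using p01 by (intro mult_nonneg_nonneg sum_nonneg) auto
  moreover have "m \<le> 1"
    unfolding m_def using sum_bounded_above[of "{1..n}" "\<lambda>i. expectation (X i)" 1] p01 assms(2)
    by (simp add: field_simps)
  ultimately have "D \<le> B"
    unfolding D_def B_def using L assms(2,6,9,10,11)
    by (intro Bernstein_deviation_le) (simp_all add: m_def)
  then have "1 - \<delta> \<le> prob {\<omega> \<in> space M. s * (1 / real n * (\<Sum>i=1..n. X i \<omega>) - m) < B}"
    if "\<bar>s\<bar> = 1" for s
    using Bernstein_Bernoulli_mean[OF _ _ indep X01 that L] assms(2)
    by (intro prob_less_ge_one_minus_tail[where a = D]) (simp_all add: D_def m_def exp_L)
  from this[of 1] this[of "- 1"] show ?thesis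
    by (simp add: B_def L_def m_def)
qed

end
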